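(* Let $\gamma>0$ with $\gamma\neq1$, and let $F(\lambda)=\gamma\sin\lambda\cos(\gamma\lambda)-\sin(\gamma\lambda)\cos\lambda$ for $\lambda\in\mathbb{C}$. Then every zero $\lambda_0\neq0$ of $F$ has multiplicity one or three. A zero $\lambda_0\neq0$ has multiplicity three if and only if $\sin\lambda_0=\sin(\gamma\lambda_0)=0$, and in that case $\lambda_0$ is real. If $\gamma$ is irrational, all nonzero zeros of $F$ are simple; if $\gamma$ is rational, $F$ has infinitely many zeros of multiplicity three. *)

theory Defs
  imports "HOL-Analysis.Analysis"
begin

definition zero_multiplicity :: "(complex \<Rightarrow> complex) \<Rightarrow> complex \<Rightarrow> nat \<Rightarrow> bool" where
  "zero_multiplicity f z0 m \<longleftrightarrow>
     (\<forall>k<m. (deriv ^^ k) f z0 = 0) \<and> (deriv ^^ m) f z0 \<noteq> 0"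

end

theory Submission
  imports Defs
begin

text \<open>F is the Wronskian of the solutions sin z and sin (\<gamma> z) of y'' = -y and y'' = -\<gamma>^2 y,
  so F' = (1 - \<gamma>^2) sin z sin (\<gamma> z). At a zero of F, one of the sines vanishes iff the other
  does, because sine and cosine have no common zero. Hence a nonzero zero of F is simple unless
  sin z = sin (\<gamma> z) = 0, and there F' and F'' vanish while F''' = 2\<gamma> (1 - \<gamma>^2) cos z cos (\<gamma> z)
  does not. Common zeros z = n\<pi> with \<gamma> z = m\<pi> exist for n \<noteq> 0 exactly when \<gamma> = m/n is rational.\<close>

definition sin_wronskian :: "complex \<Rightarrow> complex \<Rightarrow> complex" where
  "sin_wronskian g z = g * sin z * cos (g * z) - sin (g * z) * cos z"

lemma deriv_sin_wronskian:
  "deriv (sin_wronskian g) = (\<lambda>z. (1 - g\<^sup>2) * sin z * sin (g * z))"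
proof
  fix z
  have "(sin_wronskian g has_field_derivative (1 - g\<^sup>2) * sin z * sin (g * z)) (at z)"
    unfolding sin_wronskian_def[abs_def]
    by (auto intro!: derivative_eq_intros simp: algebra_simps power2_eq_square)
  then show "deriv (sin_wronskian g) z = (1 - g\<^sup>2) * sin z * sin (g * z)"
    by (rule DERIV_imp_deriv)
qed

lemma deriv2_sin_wronskian:
  "(deriv ^^ 2) (sin_wronskian g) =
     (\<lambda>z. (1 - g\<^sup>2) * (cos z * sin (g * z) + g * sin z * cos (g * z)))"
proof
  fix z
  have "((\<lambda>z. (1 - g\<^sup>2) * sin z * sin (g * z)) has_field_derivative
          (1 - g\<^sup>2) * (cos z * sin (g * z) + g * sin z * cos (g * z))) (at z)"
    by (auto intro!: derivative_eq_intros simp: algebra_simps)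
  then show "(deriv ^^ 2) (sin_wronskian g) z =
               (1 - g\<^sup>2) * (cos z * sin (g * z) + g * sin z * cos (g * z))"
    by (simp add: numeral_eq_Suc deriv_sin_wronskian DERIV_imp_deriv)
qed

lemma deriv3_sin_wronskian:
  "(deriv ^^ 3) (sin_wronskian g) =
     (\<lambda>z. (1 - g\<^sup>2) * (2 * g * cos z * cos (g * z) - (1 + g\<^sup>2) * sin z * sin (g * z)))"
proof
  fix z
  have "((\<lambda>z. (1 - g\<^sup>2) * (cos z * sin (g * z) + g * sin z * cos (g * z))) has_field_derivative
          (1 - g\<^sup>2) * (2 * g * cos z * cos (g * z) - (1 + g\<^sup>2) * sin z * sin (g * z))) (at z)"
    by (auto intro!: derivative_eq_intros simp: algebra_simps power2_eq_square)
  moreover have "(deriv ^^ 3) (sin_wronskian g) = deriv ((deriv ^^ 2) (sin_wronskian g))"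
    by (simp add: numeral_eq_Suc)
  ultimately show "(deriv ^^ 3) (sin_wronskian g) z =
               (1 - g\<^sup>2) * (2 * g * cos z * cos (g * z) - (1 + g\<^sup>2) * sin z * sin (g * z))"
    by (simp add: deriv2_sin_wronskian DERIV_imp_deriv)
qed

lemma sin_zero_imp_cos_nonzero: "sin z = 0 \<Longrightarrow> cos z \<noteq> (0 :: complex)"
  using sin_cos_squared_add[of z] by auto

lemma sin_wronskian_zero_imp_sin_eq_0_iff:
  assumes "sin_wronskian g z = 0" and "g \<noteq> 0"
  shows "sin z = 0 \<longleftrightarrow> sin (g * z) = 0"
  using assms sin_zero_imp_cos_nonzero[of z] sin_zero_imp_cos_nonzero[of "g * z"]
  by (auto simp: sin_wronskian_def)

lemma zero_multiplicity_1_sin_wronskian_iff: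
  assumes "g\<^sup>2 \<noteq> 1"
  shows "zero_multiplicity (sin_wronskian g) z 1 \<longleftrightarrow>
           sin_wronskian g z = 0 \<and> sin z \<noteq> 0 \<and> sin (g * z) \<noteq> 0"
  using assms by (auto simp: zero_multiplicity_def deriv_sin_wronskian)

lemma zero_multiplicity_3_sin_wronskian_iff:
  assumes "g \<noteq> 0" and "g\<^sup>2 \<noteq> 1"
  shows "zero_multiplicity (sin_wronskian g) z 3 \<longleftrightarrow> sin z = 0 \<and> sin (g * z) = 0"
proof
  assume "zero_multiplicity (sin_wronskian g) z 3"
  then have "sin_wronskian g z = 0" and "deriv (sin_wronskian g) z = 0"
    unfolding zero_multiplicity_def by (auto dest: spec[of _ 0] spec[of _ 1])
  then show "sin z = 0 \<and> sin (g * z) = 0"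
    using assms sin_wronskian_zero_imp_sin_eq_0_iff[of g z]
    by (auto simp: deriv_sin_wronskian)
next
  assume sines: "sin z = 0 \<and> sin (g * z) = 0"
  then have "(deriv ^^ k) (sin_wronskian g) z = 0" if "k < 3" for k
    using that less_Suc_eq[of k 2] less_2_cases[of k]
    by (auto simp: sin_wronskian_def deriv_sin_wronskian deriv2_sin_wronskian)
  moreover have "(deriv ^^ 3) (sin_wronskian g) z \<noteq> 0"
    using assms sines sin_zero_imp_cos_nonzero[of z] sin_zero_imp_cos_nonzero[of "g * z"]
    by (simp add: deriv3_sin_wronskian)
  ultimately show "zero_multiplicity (sin_wronskian g) z 3"
    unfolding zero_multiplicity_def by blast
qed

lemma common_sin_zero_imp_Rats:
  fixes \<gamma> :: real and z :: complex
  assumes "z \<noteq> 0" and "sin z = 0" and "sin (of_real \<gamma> * z) = 0"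
  shows "\<gamma> \<in> \<rat>"
proof -
  obtain n m :: int where n: "z = of_real (n * pi)" and m: "of_real \<gamma> * z = of_real (m * pi)"
    using assms(2,3) sin_eq_0 by meson
  have "n \<noteq> 0" using n assms(1) by auto
  from m n have "\<gamma> * n * pi = m * pi"
    by (metis mult.assoc of_real_eq_iff of_real_mult)
  then have "\<gamma> = of_int m / of_int n" using \<open>n \<noteq> 0\<close> by (simp add: field_simps)
  then show ?thesis by simp
qed

lemma infinite_common_sin_zeros:
  fixes \<gamma> :: real
  assumes "\<gamma> \<in> \<rat>"
  shows "infinite {z :: complex. z \<noteq> 0 \<and> sin z = 0 \<and> sin (of_real \<gamma> * z) = 0}"
proof -
  obtain a b :: int where "b > 0" and \<gamma>: "\<gamma> = of_int a / of_int b"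
    using assms by (metis Rats_cases')
  define f where "f n = complex_of_real (real (Suc n) * of_int b * pi)" for n
  have "range f \<subseteq> {z. z \<noteq> 0 \<and> sin z = 0 \<and> sin (of_real \<gamma> * z) = 0}"
  proof (rule image_subsetI)
    fix n
    have "0 < real (Suc n) * of_int b * pi"
      using \<open>b > 0\<close> by (intro mult_pos_pos) auto
    then have "f n \<noteq> 0"
      unfolding f_def by (metis less_irrefl of_real_eq_0_iff)
    moreover have "sin (f n) = 0"
      unfolding f_def sin_eq_0 by (rule exI[of _ "int (Suc n) * b"]) simp
    moreover have "of_real \<gamma> * f n = complex_of_real (of_int (int (Suc n) * a) * pi)"
      using \<open>b > 0\<close> by (simp add: f_def \<gamma>)
    then have "sin (of_real \<gamma> * f n) = 0"
      unfolding sin_eq_0 by blast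
    ultimately show "f n \<in> {z. z \<noteq> 0 \<and> sin z = 0 \<and> sin (of_real \<gamma> * z) = 0}"
      by simp
  qed
  moreover have "inj f"
    using \<open>b > 0\<close> by (auto intro!: injI simp: f_def)
  then have "infinite (range f)"
    by (rule range_inj_infinite)
  ultimately show ?thesis
    by (rule infinite_super)
qed

theorem proposition1:
  fixes \<gamma> :: real and F :: "complex \<Rightarrow> complex"
  assumes "\<gamma> > 0" and "\<gamma> \<noteq> 1"
    and F_def: "\<And>z. F z = of_real \<gamma> * sin z * cos (of_real \<gamma> * z) - sin (of_real \<gamma> * z) * cos z"
  shows "(\<forall>z. F z = 0 \<and> z \<noteq> 0 \<longrightarrow> zero_multiplicity F z 1 \<or> zero_multiplicity F z 3)
    \<and> (\<forall>z. F z = 0 \<and> z \<noteq> 0 \<longrightarrow>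
          (zero_multiplicity F z 3 \<longleftrightarrow> sin z = 0 \<and> sin (of_real \<gamma> * z) = 0))
    \<and> (\<forall>z. F z = 0 \<and> z \<noteq> 0 \<and> zero_multiplicity F z 3 \<longrightarrow> z \<in> \<real>)
    \<and> (\<gamma> \<notin> \<rat> \<longrightarrow> (\<forall>z. F z = 0 \<and> z \<noteq> 0 \<longrightarrow> zero_multiplicity F z 1))
    \<and> (\<gamma> \<in> \<rat> \<longrightarrow> infinite {z. F z = 0 \<and> z \<noteq> 0 \<and> zero_multiplicity F z 3})"
proof -
  define g where "g = complex_of_real \<gamma>"
  have F: "F = sin_wronskian g"
    by (simp add: fun_eq_iff F_def g_def sin_wronskian_def)
  have "g \<noteq> 0" using assms(1) by (simp add: g_def)
  have "g\<^sup>2 \<noteq> 1"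
  proof
    assume "g\<^sup>2 = 1"
    then have "\<gamma>\<^sup>2 = 1" unfolding g_def by (metis of_real_eq_1_iff of_real_power)
    with assms(1,2) show False by (simp add: power2_eq_1_iff)
  qed
  have triple_iff: "zero_multiplicity F z 3 \<longleftrightarrow> sin z = 0 \<and> sin (of_real \<gamma> * z) = 0" for z
    using zero_multiplicity_3_sin_wronskian_iff[OF \<open>g \<noteq> 0\<close> \<open>g\<^sup>2 \<noteq> 1\<close>] by (simp add: F g_def)
  have simple: "zero_multiplicity F z 1"
    if "F z = 0" and "\<not> (sin z = 0 \<and> sin (of_real \<gamma> * z) = 0)" for z
    using that zero_multiplicity_1_sin_wronskian_iff[OF \<open>g\<^sup>2 \<noteq> 1\<close>]
      sin_wronskian_zero_imp_sin_eq_0_iff[OF _ \<open>g \<noteq> 0\<close>]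
    unfolding F g_def by blast
  have triple_zeros: "{z. F z = 0 \<and> z \<noteq> 0 \<and> zero_multiplicity F z 3} =
      {z. z \<noteq> 0 \<and> sin z = 0 \<and> sin (of_real \<gamma> * z) = 0}"
    using triple_iff by (auto simp: F g_def sin_wronskian_def)
  have "z \<in> \<real>" if "zero_multiplicity F z 3" for z
    using that triple_iff by (auto simp: sin_eq_0)
  moreover have "\<gamma> \<in> \<rat>" if "z \<noteq> 0" and "\<not> zero_multiplicity F z 1" and "F z = 0" for z
    using that simple triple_iff common_sin_zero_imp_Rats by blast
  ultimately show ?thesis
    using simple triple_iff triple_zeros infinite_common_sin_zeros[of \<gamma>] by auto
qed

end
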